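(* Let $\mathcal{C}$ be a reversible chemical reaction network with species concentrations $x_1,\dots,x_n$, and let $G$ be its modified species--reaction graph (defined in the context). Run the edge-modification procedure described in the context on $G$, with an arbitrary fixed order on the reaction vertices and an arbitrary choice of the unmarked species vertex at each step. Then the procedure terminates, and it returns "UnconditionallyBinomial" if and only if $\mathcal{C}$ is unconditionally binomial, i.e. if and only if the steady state ideal $\langle p_1,\dots,p_n\rangle\subseteq\mathbb{Q}[k_{ij},x_1,\dots,x_n]$ (rate constants treated as indeterminates) is generated by binomials.
   Context: A reversible chemical reaction network (RCRN) consists of species $X_1,\dots,X_n$, complexes $C_1,\dots,C_s$ (each complex $C_i$ is a formal nonnegative integer combination $\sum_k y_{ik}X_k$, with monomial $m_i=\prod_k x_k^{y_{ik}}$), and a set of reversible reactions $C_i\rightleftharpoons C_j$ with $C_i\neq C_j$, each having forward rate constant $k_{ij}$ and reverse rate constant $k_{ji}$. Under mass-action kinetics, the binomial associated to the reaction $C_i\rightleftharpoons C_j$ is $b_{ij}=-k_{ij}m_i+k_{ji}m_j$, and the ODEs are $\dot x_k=p_k=\sum_{\text{reactions } C_i\rightleftharpoons C_j} c^{(k)}_{ij}b_{ij}$, where $c^{(k)}_{ij}=y_{ik}-y_{jk}$ is the difference between the stoichiometric coefficients of $X_k$ in the reactant and product complexes. The steady state ideal is $\langle p_1,\dots,p_n\rangle$; the rate constants $k_{ij}$ are treated as independent indeterminates, and the network is called unconditionally binomial if this ideal in $\mathbb{Q}[k_{ij},x_1,\dots,x_n]$ can be generated by binomials (polynomials with at most two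 terms). Modified species--reaction graph $G$: a bipartite graph with one species vertex for each species $X_k$ and one reaction vertex for each reversible reaction $C_i\rightleftharpoons C_j$ (each reversible pair counted once); there is an undirected edge between species vertex $X_k$ and reaction vertex $C_i\rightleftharpoons C_j$ exactly when $c^{(k)}_{ij}\neq 0$, and that edge carries the label $c^{(k)}_{ij}$. (Equivalently, $G$ encodes the binomial coefficient matrix, whose rows are indexed by species, columns by reactions, and entries are $c^{(k)}_{ij}$; edges correspond to nonzero entries.) For an edge $s$–$r$ write $c(s,r)$ for its current label. Procedure (Algorithm 1): Initially all species vertices are unmarked. Process the reaction vertices $r$ one at a time in a fixed order. For the current $r$, let $N(r)$ be the set of species vertices currently adjacent to $r$. If no vertex of $N(r)$ is unmarked, skip $r$. Otherwise choose an unmarked $cs\in N(r)$ and mark it; then for each $s'\in N(r)$ with $s'\neq cs$: set $\mu=-c(s',r)/c(cs,r)$; delete the edge $s'$–$r$; and for every reaction vertex $r'\neq r$ currently adjacent to $cs$: if $s'$ is adjacent to $r'$, replace its label by $c(cs,r')\mu+c(s',r')$ if this number is nonzero and delete the edge $s'$–$r'$ if it is zero; if $s'$ is not adjacent to $r'$, add the edge $s'$–$r'$ with label $c(cs,r')\mu$. After all reaction vertices have been processed, return "UnconditionallyBinomial" if every connected component of the final graph consists either of a single species vertex alone, or of exactly one species vertex and one reaction vertex joined by an edge; otherwise return "NotUnconditionallyBinomial". *)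

theory Defs
  imports Complex_Main "HOL-Library.Poly_Mapping"
begin

datatype var = X nat | K nat nat   (* X k = species concentration x_k; K i j = rate constant k_ij *)

type_synonym mpoly = "(var \<Rightarrow>\<^sub>0 nat) \<Rightarrow>\<^sub>0 rat"

definition Var :: "var \<Rightarrow> mpoly" where
  "Var v = Poly_Mapping.single (Poly_Mapping.single v 1) 1"

definition Const :: "rat \<Rightarrow> mpoly" where
  "Const c = Poly_Mapping.single 0 c"

definition is_binomial :: "mpoly \<Rightarrow> bool" where
  "is_binomial p \<longleftrightarrow> card (Poly_Mapping.keys p) \<le> 2"

definition ideal_gen :: "mpoly set \<Rightarrow> mpoly set" where
  "ideal_gen S = {p. \<exists>F c. finite F \<and> F \<subseteq> S \<and> p = (\<Sum>f\<in>F. c f * f)}"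

text \<open>n species X_0..X_(n-1); complex i has stoichiometric coefficients y i k;
  reactions are given by a list rxns of pairs (i,j) standing for C_i <=> C_j
  (each reversible pair listed once); reaction vertex r is rxns ! r.\<close>

definition monom :: "nat \<Rightarrow> (nat \<Rightarrow> nat \<Rightarrow> nat) \<Rightarrow> nat \<Rightarrow> mpoly" where
  "monom n y i = (\<Prod>k<n. Var (X k) ^ y i k)"

definition binom :: "nat \<Rightarrow> (nat \<Rightarrow> nat \<Rightarrow> nat) \<Rightarrow> nat \<Rightarrow> nat \<Rightarrow> mpoly" where
  "binom n y i j = - (Var (K i j) * monom n y i) + Var (K j i) * monom n y j"

definition coef :: "(nat \<Rightarrow> nat \<Rightarrow> nat) \<Rightarrow> nat \<Rightarrow> nat \<Rightarrow> nat \<Rightarrow> rat" where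
  "coef y k i j = of_nat (y i k) - of_nat (y j k)"

definition ss_poly :: "nat \<Rightarrow> (nat \<Rightarrow> nat \<Rightarrow> nat) \<Rightarrow> (nat \<times> nat) list \<Rightarrow> nat \<Rightarrow> mpoly" where
  "ss_poly n y rxns k = (\<Sum>r<length rxns. case rxns ! r of (i, j) \<Rightarrow> Const (coef y k i j) * binom n y i j)"

definition steady_state_ideal :: "nat \<Rightarrow> (nat \<Rightarrow> nat \<Rightarrow> nat) \<Rightarrow> (nat \<times> nat) list \<Rightarrow> mpoly set" where
  "steady_state_ideal n y rxns = ideal_gen (ss_poly n y rxns ` {..<n})"

definition unconditionally_binomial :: "nat \<Rightarrow> (nat \<Rightarrow> nat \<Rightarrow> nat) \<Rightarrow> (nat \<times> nat) list \<Rightarrow> bool" where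
  "unconditionally_binomial n y rxns \<longleftrightarrow>
     (\<exists>B. (\<forall>b\<in>B. is_binomial b) \<and> ideal_gen B = steady_state_ideal n y rxns)"

text \<open>A labelled bipartite graph is encoded by L s r (species s < n, reaction r < m);
  there is an edge s--r iff L s r \<noteq> 0, and then L s r is its label.\<close>

definition init_graph :: "(nat \<Rightarrow> nat \<Rightarrow> nat) \<Rightarrow> (nat \<times> nat) list \<Rightarrow> nat \<Rightarrow> nat \<Rightarrow> rat" where
  "init_graph y rxns s r = (case rxns ! r of (i, j) \<Rightarrow> coef y s i j)"

definition nbrs :: "nat \<Rightarrow> (nat \<Rightarrow> nat \<Rightarrow> rat) \<Rightarrow> nat \<Rightarrow> nat set" where
  "nbrs n L r = {s. s < n \<and> L s r \<noteq> 0}"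

text \<open>Processing reaction vertex r with chosen (unmarked) species cs.  The updates for
  the different s' are independent of each other, so they are performed simultaneously.\<close>
definition pivot :: "nat \<Rightarrow> nat \<Rightarrow> (nat \<Rightarrow> nat \<Rightarrow> rat) \<Rightarrow> nat \<Rightarrow> nat \<Rightarrow> nat \<Rightarrow> nat \<Rightarrow> rat" where
  "pivot n m L r cs = (\<lambda>s r'.
     if s \<in> nbrs n L r \<and> s \<noteq> cs then
       (if r' = r then 0
        else if r' < m \<and> L cs r' \<noteq> 0 then L cs r' * (- L s r / L cs r) + L s r'
        else L s r')
     else L s r')"

text \<open>run n m order (L, M) (L', M'): processing the reaction vertices in the list
  order, starting from graph L with marked set M, can end in (L', M'), for some
  choice of unmarked species vertices.\<close>
inductive run :: "nat \<Rightarrow> nat \<Rightarrow> nat list \<Rightarrow> (nat \<Rightarrow> nat \<Rightarrow> rat) \<times> nat set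
                    \<Rightarrow> (nat \<Rightarrow> nat \<Rightarrow> rat) \<times> nat set \<Rightarrow> bool" for n m where
  run_Nil: "run n m [] S S"
| run_skip: "nbrs n L r \<subseteq> M \<Longrightarrow> run n m rs (L, M) S' \<Longrightarrow> run n m (r # rs) (L, M) S'"
| run_pivot: "cs \<in> nbrs n L r \<Longrightarrow> cs \<notin> M \<Longrightarrow>
     run n m rs (pivot n m L r cs, insert cs M) S' \<Longrightarrow> run n m (r # rs) (L, M) S'"

definition vertices :: "nat \<Rightarrow> nat \<Rightarrow> (nat + nat) set" where
  "vertices n m = Inl ` {..<n} \<union> Inr ` {..<m}"

definition edges :: "nat \<Rightarrow> nat \<Rightarrow> (nat \<Rightarrow> nat \<Rightarrow> rat) \<Rightarrow> ((nat + nat) \<times> (nat + nat)) set" where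
  "edges n m L = {(Inl s, Inr r) | s r. s < n \<and> r < m \<and> L s r \<noteq> 0}
              \<union> {(Inr r, Inl s) | s r. s < n \<and> r < m \<and> L s r \<noteq> 0}"

definition component :: "nat \<Rightarrow> nat \<Rightarrow> (nat \<Rightarrow> nat \<Rightarrow> rat) \<Rightarrow> nat + nat \<Rightarrow> (nat + nat) set" where
  "component n m L v = {w. (v, w) \<in> (edges n m L)\<^sup>*}"

definition returns_UB :: "nat \<Rightarrow> nat \<Rightarrow> (nat \<Rightarrow> nat \<Rightarrow> rat) \<Rightarrow> bool" where
  "returns_UB n m L \<longleftrightarrow> (\<forall>v\<in>vertices n m.
      (\<exists>s<n. component n m L v = {Inl s}) \<or>
      (\<exists>s<n. \<exists>r<m. L s r \<noteq> 0 \<and> component n m L v = {Inl s, Inr r}))"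

end

theory Submission
  imports Defs
begin

(* Write (p_1, ..., p_n) = C b with C the species-by-reaction coefficient matrix and b the vector
   of reaction binomials. Algorithm 1 only adds multiples of one row of C to other rows, so the
   row space of C never changes, and it returns "UnconditionallyBinomial" exactly when every unit
   vector e_r lies in that row space: the processed columns then become the pivot columns of a
   reduced echelon form, while a skipped column would contradict e_r being in the row space.

   If every e_r is in the row space, each b_r is a rational combination of the p_k, so the b_r
   generate the steady-state ideal. Conversely, evaluation at k = 0, x = 1 is a ring homomorphism
   and the partial derivative in a rate constant at that point is a derivation over it. Hence
   every element of the ideal vanishes there and its gradient in the reverse rate constants lies
   in the row space of C. A binomial has at most two terms, so at most two rate constants occur
   linearly in it; a binomial generator needed to express p_k with C(k, r) /= 0 therefore has
   gradient proportional to e_r. *)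

section \<open>Ideals generated by a set\<close>

lemma ideal_gen_0: "0 \<in> ideal_gen S"
  unfolding ideal_gen_def by (intro CollectI exI[of _ "{}"]) simp

lemma ideal_gen_base: "f \<in> S \<Longrightarrow> f \<in> ideal_gen S"
  unfolding ideal_gen_def by (intro CollectI exI[of _ "{f}"] exI[of _ "\<lambda>_. 1"]) simp

lemma ideal_gen_mult_left:
  assumes "a \<in> ideal_gen S"
  shows "q * a \<in> ideal_gen S"
proof -
  obtain F c where F: "finite F" "F \<subseteq> S" "a = (\<Sum>f\<in>F. c f * f)"
    using assms unfolding ideal_gen_def by blast
  have "q * a = (\<Sum>f\<in>F. (q * c f) * f)"
    unfolding F(3) by (simp add: sum_distrib_left mult.assoc)
  then show ?thesis
    using F(1,2) unfolding ideal_gen_def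
    by (intro CollectI exI[of _ F] exI[of _ "\<lambda>f. q * c f"]) simp
qed

lemma ideal_gen_add:
  assumes "a \<in> ideal_gen S" "b \<in> ideal_gen S"
  shows "a + b \<in> ideal_gen S"
proof -
  obtain F G c d where F: "finite F" "F \<subseteq> S" "a = (\<Sum>f\<in>F. c f * f)"
    and G: "finite G" "G \<subseteq> S" "b = (\<Sum>f\<in>G. d f * f)"
    using assms unfolding ideal_gen_def by blast
  let ?c = "\<lambda>f. if f \<in> F then c f else 0" and ?d = "\<lambda>f. if f \<in> G then d f else 0"
  have "a = (\<Sum>f\<in>F \<union> G. ?c f * f)" "b = (\<Sum>f\<in>F \<union> G. ?d f * f)"
    unfolding F(3) G(3) using F(1) G(1) by (auto intro: sum.mono_neutral_cong_left)
  then have "a + b = (\<Sum>f\<in>F \<union> G. (?c f + ?d f) * f)"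
    by (simp add: distrib_right sum.distrib)
  then show ?thesis
    using F G unfolding ideal_gen_def
    by (intro CollectI exI[of _ "F \<union> G"] exI[of _ "\<lambda>f. ?c f + ?d f"]) simp
qed

lemma ideal_gen_sum:
  "finite A \<Longrightarrow> (\<And>x. x \<in> A \<Longrightarrow> g x \<in> ideal_gen S) \<Longrightarrow> (\<Sum>x\<in>A. g x) \<in> ideal_gen S"
  by (induction A rule: finite_induct) (auto intro: ideal_gen_0 ideal_gen_add)

lemma ideal_gen_lincomb:
  "finite A \<Longrightarrow> g ` A \<subseteq> S \<Longrightarrow> (\<Sum>x\<in>A. q x * g x) \<in> ideal_gen S"
  by (rule ideal_gen_sum) (auto intro: ideal_gen_mult_left ideal_gen_base)

lemma ideal_gen_induct [consumes 1, case_names zero add mult base]: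
  assumes "p \<in> ideal_gen S" "P 0"
    and "\<And>a b. P a \<Longrightarrow> P b \<Longrightarrow> P (a + b)" "\<And>q a. P a \<Longrightarrow> P (q * a)"
    and "\<And>f. f \<in> S \<Longrightarrow> P f"
  shows "P p"
proof -
  obtain F c where F: "finite F" "F \<subseteq> S" "p = (\<Sum>f\<in>F. c f * f)"
    using assms(1) unfolding ideal_gen_def by blast
  from F(1,2) have "P (\<Sum>f\<in>F. c f * f)"
    by (induction F rule: finite_induct) (simp_all add: assms(2-5))
  then show ?thesis using F(3) by simp
qed

lemma ideal_gen_subset: "S \<subseteq> ideal_gen T \<Longrightarrow> ideal_gen S \<subseteq> ideal_gen T"
  by (auto elim: ideal_gen_induct intro: ideal_gen_0 ideal_gen_add ideal_gen_mult_left)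

section \<open>Coefficient functionals\<close>

definition coeff_sum :: "((var \<Rightarrow>\<^sub>0 nat) \<Rightarrow> rat) \<Rightarrow> mpoly \<Rightarrow> rat" where
  "coeff_sum w p = (\<Sum>\<alpha>\<in>Poly_Mapping.keys p. Poly_Mapping.lookup p \<alpha> * w \<alpha>)"

lemma coeff_sum_superset:
  "finite A \<Longrightarrow> Poly_Mapping.keys p \<subseteq> A \<Longrightarrow>
    coeff_sum w p = (\<Sum>\<alpha>\<in>A. Poly_Mapping.lookup p \<alpha> * w \<alpha>)"
  unfolding coeff_sum_def by (rule sum.mono_neutral_left) (auto simp: in_keys_iff)

lemma coeff_sum_0 [simp]: "coeff_sum w 0 = 0"
  unfolding coeff_sum_def by simp

lemma coeff_sum_single [simp]: "coeff_sum w (Poly_Mapping.single \<alpha> c) = c * w \<alpha>"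
  unfolding coeff_sum_def by simp

lemma coeff_sum_uminus [simp]: "coeff_sum w (- p) = - coeff_sum w p"
  unfolding coeff_sum_def by (simp add: sum_negf)

lemma coeff_sum_add [simp]: "coeff_sum w (p + q) = coeff_sum w p + coeff_sum w q"
proof -
  let ?A = "Poly_Mapping.keys p \<union> Poly_Mapping.keys q"
  have "Poly_Mapping.keys (p + q) \<subseteq> ?A"
    by (rule keys_add)
  then show ?thesis
    by (simp add: coeff_sum_superset[of ?A] lookup_add distrib_right sum.distrib)
qed

lemma coeff_sum_sum: "coeff_sum w (\<Sum>x\<in>A. f x) = (\<Sum>x\<in>A. coeff_sum w (f x))"
  by (induction A rule: infinite_finite_induct) simp_all

lemma coeff_sum_mult:
  "coeff_sum w (p * q) = (\<Sum>\<alpha>\<in>Poly_Mapping.keys p. \<Sum>\<beta>\<in>Poly_Mapping.keys q.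
     Poly_Mapping.lookup p \<alpha> * Poly_Mapping.lookup q \<beta> * w (\<alpha> + \<beta>))"
proof -
  have expand: "f = (\<Sum>\<alpha>\<in>Poly_Mapping.keys f. Poly_Mapping.single \<alpha> (Poly_Mapping.lookup f \<alpha>))"
    for f :: mpoly
    by (rule poly_mapping_eqI) (simp add: lookup_sum lookup_single when_def in_keys_iff)
  have "p * q = (\<Sum>\<alpha>\<in>Poly_Mapping.keys p. \<Sum>\<beta>\<in>Poly_Mapping.keys q.
      Poly_Mapping.single (\<alpha> + \<beta>) (Poly_Mapping.lookup p \<alpha> * Poly_Mapping.lookup q \<beta>))"
    by (subst expand[of p], subst expand[of q], simp only: sum_distrib_right)
       (simp only: sum_distrib_left mult_single)
  then show ?thesis
    by (simp add: coeff_sum_sum)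
qed

lemma coeff_sum_mult_hom:
  assumes "\<And>\<alpha> \<beta>. w (\<alpha> + \<beta>) = w \<alpha> * w \<beta>"
  shows "coeff_sum w (p * q) = coeff_sum w p * coeff_sum w q"
  unfolding coeff_sum_mult assms by (simp add: coeff_sum_def sum_product algebra_simps)

lemma coeff_sum_mult_derivation:
  assumes "\<And>\<alpha> \<beta>. d (\<alpha> + \<beta>) = w \<alpha> * d \<beta> + d \<alpha> * w \<beta>"
  shows "coeff_sum d (p * q) = coeff_sum w p * coeff_sum d q + coeff_sum d p * coeff_sum w q"
proof -
  have "coeff_sum d (p * q) =
    (\<Sum>\<alpha>\<in>Poly_Mapping.keys p. \<Sum>\<beta>\<in>Poly_Mapping.keys q.
      (Poly_Mapping.lookup p \<alpha> * w \<alpha>) * (Poly_Mapping.lookup q \<beta> * d \<beta>)) +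
    (\<Sum>\<alpha>\<in>Poly_Mapping.keys p. \<Sum>\<beta>\<in>Poly_Mapping.keys q.
      (Poly_Mapping.lookup p \<alpha> * d \<alpha>) * (Poly_Mapping.lookup q \<beta> * w \<beta>))"
    unfolding coeff_sum_mult assms sum.distrib[symmetric] by (simp add: algebra_simps)
  then show ?thesis
    by (simp only: coeff_sum_def sum_product)
qed

definition k_free :: "(var \<Rightarrow>\<^sub>0 nat) \<Rightarrow> rat" where
  "k_free \<alpha> = (if \<forall>i j. Poly_Mapping.lookup \<alpha> (K i j) = 0 then 1 else 0)"

definition k_linear :: "var \<Rightarrow> (var \<Rightarrow>\<^sub>0 nat) \<Rightarrow> rat" where
  "k_linear v \<alpha> = (if Poly_Mapping.lookup \<alpha> v = 1
     \<and> (\<forall>i j. K i j \<noteq> v \<longrightarrow> Poly_Mapping.lookup \<alpha> (K i j) = 0) then 1 else 0)"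

lemma k_free_add: "k_free (\<alpha> + \<beta>) = k_free \<alpha> * k_free \<beta>"
  unfolding k_free_def by (auto simp: lookup_add)

lemma k_linear_add:
  "k_linear (K a b) (\<alpha> + \<beta>) = k_free \<alpha> * k_linear (K a b) \<beta> + k_linear (K a b) \<alpha> * k_free \<beta>"
proof -
  define others_free where
    "others_free (\<gamma> :: var \<Rightarrow>\<^sub>0 nat) \<longleftrightarrow>
      (\<forall>i j. K i j \<noteq> K a b \<longrightarrow> Poly_Mapping.lookup \<gamma> (K i j) = 0)" for \<gamma>
  have free: "k_free \<gamma> = (if others_free \<gamma> \<and> Poly_Mapping.lookup \<gamma> (K a b) = 0 then 1 else 0)" for \<gamma>
    unfolding k_free_def others_free_def
    by (intro arg_cong[where f = "\<lambda>P. if P then 1 else 0"]) (auto, metis)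
  have linear: "k_linear (K a b) \<gamma> =
      (if Poly_Mapping.lookup \<gamma> (K a b) = 1 \<and> others_free \<gamma> then 1 else 0)" for \<gamma>
    unfolding k_linear_def others_free_def ..
  have "others_free (\<alpha> + \<beta>) \<longleftrightarrow> others_free \<alpha> \<and> others_free \<beta>"
    unfolding others_free_def lookup_add by auto
  then show ?thesis
    unfolding free linear lookup_add by (auto simp: add_is_1)
qed

text \<open>\<open>eval0 p\<close> is the value of \<open>p\<close> at \<open>k = 0, x = 1\<close>, and \<open>deriv0 v p\<close> is the partial
  derivative of \<open>p\<close> in \<open>v\<close> at that point.\<close>
abbreviation eval0 :: "mpoly \<Rightarrow> rat" where
  "eval0 \<equiv> coeff_sum k_free"

abbreviation deriv0 :: "var \<Rightarrow> mpoly \<Rightarrow> rat" where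
  "deriv0 v \<equiv> coeff_sum (k_linear v)"

lemma eval0_mult: "eval0 (p * q) = eval0 p * eval0 q"
  by (rule coeff_sum_mult_hom) (rule k_free_add)

lemma deriv0_mult:
  "deriv0 (K a b) (p * q) = eval0 p * deriv0 (K a b) q + deriv0 (K a b) p * eval0 q"
  by (rule coeff_sum_mult_derivation) (rule k_linear_add)

lemma Const_mult: "Const a * Const b = Const (a * b)"
  unfolding Const_def by (simp add: mult_single)

lemma Const_sum: "(\<Sum>x\<in>A. Const (f x)) = Const (\<Sum>x\<in>A. f x)"
  unfolding Const_def by (induction A rule: infinite_finite_induct) (simp_all add: single_add)

lemma Const_0 [simp]: "Const 0 = 0"
  unfolding Const_def by simp

lemma Const_1 [simp]: "Const 1 = 1"
  unfolding Const_def by simp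

lemma eval0_Const [simp]: "eval0 (Const a) = a"
  unfolding Const_def k_free_def by simp

lemma deriv0_Const [simp]: "deriv0 v (Const a) = 0"
  unfolding Const_def k_linear_def by simp

definition mexp :: "nat \<Rightarrow> (nat \<Rightarrow> nat \<Rightarrow> nat) \<Rightarrow> nat \<Rightarrow> var \<Rightarrow>\<^sub>0 nat" where
  "mexp n y i = (\<Sum>k<n. Poly_Mapping.single (X k) (y i k))"

definition flux_exp :: "nat \<Rightarrow> (nat \<Rightarrow> nat \<Rightarrow> nat) \<Rightarrow> nat \<Rightarrow> nat \<Rightarrow> var \<Rightarrow>\<^sub>0 nat" where
  "flux_exp n y i j = Poly_Mapping.single (K i j) 1 + mexp n y i"

lemma Var_power: "Var v ^ e = Poly_Mapping.single (Poly_Mapping.single v e) 1"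
  by (induction e)
     (simp_all add: Var_def mult_single single_add[symmetric] plus_1_eq_Suc del: One_nat_def)

lemma monom_eq_single: "monom n y i = Poly_Mapping.single (mexp n y i) 1"
proof -
  have "(\<Prod>k\<in>A. Poly_Mapping.single (f k) (1::rat)) = Poly_Mapping.single (\<Sum>k\<in>A. f k) 1"
    for A and f :: "nat \<Rightarrow> var \<Rightarrow>\<^sub>0 nat"
    by (induction A rule: infinite_finite_induct) (simp_all add: mult_single)
  then show ?thesis
    unfolding monom_def mexp_def Var_power by simp
qed

lemma binom_eq_single:
  "binom n y i j =
    - Poly_Mapping.single (flux_exp n y i j) 1 + Poly_Mapping.single (flux_exp n y j i) 1"
  unfolding binom_def flux_exp_def monom_eq_single Var_def by (simp add: mult_single)

lemma lookup_flux_exp_K: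
  "Poly_Mapping.lookup (flux_exp n y i j) (K a b) = (if K a b = K i j then 1 else 0)"
  unfolding flux_exp_def mexp_def by (simp add: lookup_add lookup_sum lookup_single when_def)

lemma k_free_flux_exp: "k_free (flux_exp n y i j) = 0"
  unfolding k_free_def lookup_flux_exp_K by auto

lemma k_linear_flux_exp: "k_linear (K a b) (flux_exp n y i j) = (if K a b = K i j then 1 else 0)"
  unfolding k_linear_def lookup_flux_exp_K by auto

lemma eval0_binom: "eval0 (binom n y i j) = 0"
  unfolding binom_eq_single
  by (simp only: coeff_sum_add coeff_sum_uminus coeff_sum_single k_free_flux_exp)

lemma deriv0_binom:
  "deriv0 (K a b) (binom n y i j) =
    (if K a b = K j i then 1 else 0) - (if K a b = K i j then 1 else 0)"
  unfolding binom_eq_single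
  by (simp only: coeff_sum_add coeff_sum_uminus coeff_sum_single k_linear_flux_exp)

lemma binom_is_binomial: "is_binomial (binom n y i j)"
proof -
  have "Poly_Mapping.keys (binom n y i j) \<subseteq> {flux_exp n y i j, flux_exp n y j i}"
    unfolding binom_eq_single by (rule order.trans[OF keys_add]) auto
  then have "card (Poly_Mapping.keys (binom n y i j)) \<le> card {flux_exp n y i j, flux_exp n y j i}"
    by (rule card_mono[rotated]) simp
  also have "\<dots> \<le> 2"
    by (simp add: card_insert_if)
  finally show ?thesis
    unfolding is_binomial_def .
qed

lemma k_linear_unique:
  assumes "k_linear v \<alpha> \<noteq> 0" "k_linear (K a b) \<alpha> \<noteq> 0"
  shows "v = K a b"
proof (rule ccontr)
  assume "v \<noteq> K a b"
  then have "Poly_Mapping.lookup \<alpha> (K a b) = 0"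
    using assms(1) unfolding k_linear_def by (auto split: if_splits)
  moreover have "Poly_Mapping.lookup \<alpha> (K a b) = 1"
    using assms(2) unfolding k_linear_def by (auto split: if_splits)
  ultimately show False
    by simp
qed

lemma deriv0_nonzero_key:
  assumes "deriv0 v f \<noteq> 0"
  obtains \<alpha> where "\<alpha> \<in> Poly_Mapping.keys f" "k_linear v \<alpha> \<noteq> 0"
proof -
  obtain \<alpha> where "\<alpha> \<in> Poly_Mapping.keys f" "Poly_Mapping.lookup f \<alpha> * k_linear v \<alpha> \<noteq> 0"
    using assms unfolding coeff_sum_def by (meson sum.not_neutral_contains_not_neutral)
  then show ?thesis
    using that by simp
qed

lemma binomial_deriv0_nonzero_at_most_two:
  assumes "is_binomial f"
    and "deriv0 (K a1 b1) f \<noteq> 0" "deriv0 (K a2 b2) f \<noteq> 0" "deriv0 (K a3 b3) f \<noteq> 0"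
  shows "K a1 b1 = K a2 b2 \<or> K a1 b1 = K a3 b3 \<or> K a2 b2 = K a3 b3"
proof (rule ccontr)
  assume distinct: "\<not> ?thesis"
  obtain \<alpha>1 \<alpha>2 \<alpha>3
    where keys: "\<alpha>1 \<in> Poly_Mapping.keys f" "\<alpha>2 \<in> Poly_Mapping.keys f" "\<alpha>3 \<in> Poly_Mapping.keys f"
    and lin: "k_linear (K a1 b1) \<alpha>1 \<noteq> 0" "k_linear (K a2 b2) \<alpha>2 \<noteq> 0" "k_linear (K a3 b3) \<alpha>3 \<noteq> 0"
    using deriv0_nonzero_key[OF assms(2)] deriv0_nonzero_key[OF assms(3)]
      deriv0_nonzero_key[OF assms(4)] by metis
  have "\<alpha>1 \<noteq> \<alpha>2" "\<alpha>1 \<noteq> \<alpha>3" "\<alpha>2 \<noteq> \<alpha>3"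
    using distinct lin k_linear_unique by metis+
  then have "card {\<alpha>1, \<alpha>2, \<alpha>3} = 3"
    by simp
  moreover have "card {\<alpha>1, \<alpha>2, \<alpha>3} \<le> card (Poly_Mapping.keys f)"
    using keys by (intro card_mono) auto
  ultimately show False
    using assms(1) unfolding is_binomial_def by simp
qed

section \<open>Row spaces and Algorithm 1\<close>

definition unit_vec :: "nat \<Rightarrow> nat \<Rightarrow> rat" where
  "unit_vec r = (\<lambda>r'. if r' = r then 1 else 0)"

definition in_row_space :: "nat \<Rightarrow> nat \<Rightarrow> (nat \<Rightarrow> nat \<Rightarrow> rat) \<Rightarrow> (nat \<Rightarrow> rat) \<Rightarrow> bool" where
  "in_row_space n m L x \<longleftrightarrow> (\<exists>v. \<forall>r<m. x r = (\<Sum>s<n. v s * L s r))"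

lemma in_row_space_eqI:
  "in_row_space n m L x \<Longrightarrow> (\<And>r. r < m \<Longrightarrow> x r = x' r) \<Longrightarrow> in_row_space n m L x'"
  unfolding in_row_space_def by simp

lemma in_row_space_0: "in_row_space n m L (\<lambda>r. 0)"
  unfolding in_row_space_def by (intro exI[of _ "\<lambda>_. 0"]) simp

lemma in_row_space_scale:
  assumes "in_row_space n m L x"
  shows "in_row_space n m L (\<lambda>r. c * x r)"
proof -
  obtain v where "\<forall>r<m. x r = (\<Sum>s<n. v s * L s r)"
    using assms unfolding in_row_space_def by blast
  then have "\<forall>r<m. c * x r = (\<Sum>s<n. (c * v s) * L s r)"
    by (simp add: sum_distrib_left mult.assoc)
  then show ?thesis
    unfolding in_row_space_def by (intro exI[of _ "\<lambda>s. c * v s"])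
qed

lemma in_row_space_add:
  assumes "in_row_space n m L x" "in_row_space n m L x'"
  shows "in_row_space n m L (\<lambda>r. x r + x' r)"
proof -
  obtain v v' where "\<forall>r<m. x r = (\<Sum>s<n. v s * L s r)" "\<forall>r<m. x' r = (\<Sum>s<n. v' s * L s r)"
    using assms unfolding in_row_space_def by blast
  then have "\<forall>r<m. x r + x' r = (\<Sum>s<n. (v s + v' s) * L s r)"
    by (simp add: distrib_right sum.distrib)
  then show ?thesis
    unfolding in_row_space_def by (intro exI[of _ "\<lambda>s. v s + v' s"])
qed

lemma in_row_space_sum:
  "(\<And>a. a \<in> A \<Longrightarrow> in_row_space n m L (f a)) \<Longrightarrow> in_row_space n m L (\<lambda>r. \<Sum>a\<in>A. f a r)"
  by (induction A rule: infinite_finite_induct) (simp_all add: in_row_space_0 in_row_space_add)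

lemma in_row_space_row: "s < n \<Longrightarrow> in_row_space n m L (L s)"
  unfolding in_row_space_def by (intro exI[of _ "\<lambda>t. of_bool (t = s)"]) simp

lemma in_row_space_trans:
  assumes rows: "\<And>s. s < n \<Longrightarrow> in_row_space n m L' (L s)" and x: "in_row_space n m L x"
  shows "in_row_space n m L' x"
proof -
  obtain v where v: "\<forall>r<m. x r = (\<Sum>s<n. v s * L s r)"
    using x unfolding in_row_space_def by blast
  have "in_row_space n m L' (\<lambda>r. \<Sum>s<n. v s * L s r)"
    by (intro in_row_space_sum in_row_space_scale rows) simp
  then show ?thesis
    by (rule in_row_space_eqI) (simp add: v)
qed

lemma in_row_space_unit_vec:
  assumes "s < n" "L s r \<noteq> 0" "\<And>r'. r' < m \<Longrightarrow> r' \<noteq> r \<Longrightarrow> L s r' = 0"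
  shows "in_row_space n m L (unit_vec r)"
proof -
  have "in_row_space n m L (\<lambda>r'. 1 / L s r * L s r')"
    by (rule in_row_space_scale, rule in_row_space_row) fact
  moreover have "1 / L s r * L s r' = unit_vec r r'" if "r' < m" for r'
    using assms that unfolding unit_vec_def by auto
  ultimately show ?thesis
    by (rule in_row_space_eqI)
qed

lemma in_row_space_add_multiple_of_row:
  assumes cs: "cs < n" "w cs = 0"
    and L': "\<And>s r. s < n \<Longrightarrow> r < m \<Longrightarrow> L' s r = L s r + w s * L cs r"
  shows "in_row_space n m L' x \<longleftrightarrow> in_row_space n m L x"
proof
  have L'_cs: "L' cs r = L cs r" if "r < m" for r
    using L'[OF cs(1) that] cs(2) by simp
  show "in_row_space n m L x" if "in_row_space n m L' x"
  proof (rule in_row_space_trans[OF _ that])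
    fix s assume "s < n"
    have "in_row_space n m L (\<lambda>r. L s r + w s * L cs r)"
      using in_row_space_add[OF in_row_space_row[OF \<open>s < n\<close>]
          in_row_space_scale[OF in_row_space_row[OF cs(1)], where c = "w s"]] .
    then show "in_row_space n m L (L' s)"
      by (rule in_row_space_eqI) (simp add: L'[OF \<open>s < n\<close>])
  qed
  show "in_row_space n m L' x" if "in_row_space n m L x"
  proof (rule in_row_space_trans[OF _ that])
    fix s assume "s < n"
    have "in_row_space n m L' (\<lambda>r. L' s r + (- w s) * L' cs r)"
      using in_row_space_add[OF in_row_space_row[OF \<open>s < n\<close>]
          in_row_space_scale[OF in_row_space_row[OF cs(1)], where c = "- w s"]] .
    moreover have "L' s r + (- w s) * L' cs r = L s r" if "r < m" for r
      using L'[OF \<open>s < n\<close> that] L'_cs[OF that] by simp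
    ultimately show "in_row_space n m L' (L s)"
      by (rule in_row_space_eqI)
  qed
qed

lemma pivot_row_space:
  assumes "cs \<in> nbrs n L r"
  shows "in_row_space n m (pivot n m L r cs) x \<longleftrightarrow> in_row_space n m L x"
proof -
  have cs: "cs < n" "L cs r \<noteq> 0"
    using assms unfolding nbrs_def by auto
  let ?w = "\<lambda>s. if s \<in> nbrs n L r \<and> s \<noteq> cs then - L s r / L cs r else 0"
  have pivot_eq: "pivot n m L r cs s r' = L s r' + ?w s * L cs r'" if "r' < m" for s r'
    using cs(2) that unfolding pivot_def by auto
  show ?thesis
    by (rule in_row_space_add_multiple_of_row[where w = ?w and cs = cs])
       (simp add: cs(1), simp, simp add: pivot_eq)
qed

lemma run_exists: "\<exists>S'. run n m rs S S'"
proof (induction rs arbitrary: S)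
  case Nil
  show ?case by (blast intro: run_Nil)
next
  case (Cons r rs)
  obtain L M where S: "S = (L, M)"
    by (cases S)
  show ?case
  proof (cases "nbrs n L r \<subseteq> M")
    case True
    obtain S' where "run n m rs (L, M) S'"
      using Cons.IH by blast
    then show ?thesis
      using run_skip[OF True] S by blast
  next
    case False
    then obtain cs where cs: "cs \<in> nbrs n L r" "cs \<notin> M"
      by blast
    obtain S' where "run n m rs (pivot n m L r cs, insert cs M) S'"
      using Cons.IH by blast
    then show ?thesis
      using run_pivot[OF cs] S by blast
  qed
qed

lemma run_row_space: "run n m rs S S' \<Longrightarrow> in_row_space n m (fst S') x \<longleftrightarrow> in_row_space n m (fst S) x"
  by (induction rule: run.induct) (simp_all add: pivot_row_space)

text \<open>Invariant of Algorithm 1 once the reaction vertices in \<open>D\<close> are processed and the species in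
  \<open>M\<close> are marked: \<open>L\<close> restricted to the columns \<open>D\<close> is a reduced echelon form with pivot rows \<open>M\<close>.\<close>
definition echelon :: "nat \<Rightarrow> nat set \<Rightarrow> (nat \<Rightarrow> nat \<Rightarrow> rat) \<Rightarrow> nat set \<Rightarrow> bool" where
  "echelon n D L M \<longleftrightarrow> M \<subseteq> {..<n}
     \<and> (\<forall>r\<in>D. \<exists>s\<in>M. nbrs n L r = {s})
     \<and> (\<forall>s\<in>M. \<exists>r\<in>D. L s r \<noteq> 0)
     \<and> (\<forall>s<n. \<forall>r1\<in>D. \<forall>r2\<in>D. L s r1 \<noteq> 0 \<longrightarrow> L s r2 \<noteq> 0 \<longrightarrow> r1 = r2)"

lemma echelonD:
  assumes "echelon n D L M"
  shows "M \<subseteq> {..<n}"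
    and "r \<in> D \<Longrightarrow> \<exists>s\<in>M. nbrs n L r = {s}"
    and "s \<in> M \<Longrightarrow> \<exists>r\<in>D. L s r \<noteq> 0"
    and "s < n \<Longrightarrow> r1 \<in> D \<Longrightarrow> r2 \<in> D \<Longrightarrow> L s r1 \<noteq> 0 \<Longrightarrow> L s r2 \<noteq> 0 \<Longrightarrow> r1 = r2"
  using assms unfolding echelon_def by blast+

lemma echelon_empty: "echelon n {} L {}"
  unfolding echelon_def by simp

lemma echelon_unmarked_zero:
  assumes "echelon n D L M" "r \<in> D" "s < n" "s \<notin> M"
  shows "L s r = 0"
proof -
  obtain t where "t \<in> M" "nbrs n L r = {t}"
    using echelonD(2)[OF assms(1,2)] by blast
  then have "s \<notin> nbrs n L r"
    using assms(4) by auto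
  then show ?thesis
    using assms(3) unfolding nbrs_def by simp
qed

lemma nbrs_pivot: "cs \<in> nbrs n L r \<Longrightarrow> nbrs n (pivot n m L r cs) r = {cs}"
  unfolding nbrs_def pivot_def by auto

lemma pivot_row_cs: "pivot n m L r cs cs = L cs"
  unfolding pivot_def by auto

lemma pivot_col_unchanged: "r' \<noteq> r \<Longrightarrow> L cs r' = 0 \<Longrightarrow> pivot n m L r cs s r' = L s r'"
  unfolding pivot_def by auto

lemma echelon_pivot:
  assumes ech: "echelon n D L M" and cs: "cs \<in> nbrs n L r" "cs \<notin> M" and r: "r \<notin> D"
  shows "echelon n (insert r D) (pivot n m L r cs) (insert cs M)"
proof -
  let ?L = "pivot n m L r cs"
  have cs_n: "cs < n" "L cs r \<noteq> 0"
    using cs(1) unfolding nbrs_def by auto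
  have cs_zero: "L cs r' = 0" if "r' \<in> D" for r'
    using echelon_unmarked_zero[OF ech that cs_n(1) cs(2)] .
  have old: "?L s r' = L s r'" if "r' \<in> D" for s r'
    using that r cs_zero[OF that] by (auto intro: pivot_col_unchanged)
  have nbrs_old: "nbrs n ?L r' = nbrs n L r'" if "r' \<in> D" for r'
    using old[OF that] unfolding nbrs_def by simp
  have new: "nbrs n ?L r = {cs}"
    by (rule nbrs_pivot) fact
  note M = echelonD[OF ech]
  have row_new: "r' = r" if "s < n" "r' \<in> insert r D" "?L s r \<noteq> 0" "?L s r' \<noteq> 0" for s r'
  proof -
    have "s = cs"
      using new that(1,3) unfolding nbrs_def by blast
    then show ?thesis
      using that(2,4) cs_zero old pivot_row_cs by (metis insertE)
  qed
  have "\<forall>s<n. \<forall>r1\<in>insert r D. \<forall>r2\<in>insert r D.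
      ?L s r1 \<noteq> 0 \<longrightarrow> ?L s r2 \<noteq> 0 \<longrightarrow> r1 = r2"
    using M(4) old row_new by (metis insertE)
  moreover have "\<forall>r'\<in>insert r D. \<exists>s\<in>insert cs M. nbrs n ?L r' = {s}"
    using M(2) new nbrs_old by auto
  moreover have "\<forall>s\<in>insert cs M. \<exists>r'\<in>insert r D. ?L s r' \<noteq> 0"
    using M(3) old cs_n(2) pivot_row_cs by (metis insert_iff)
  ultimately show ?thesis
    using M(1) cs_n(1) unfolding echelon_def by blast
qed

lemma echelon_unmarked_nbr:
  assumes ech: "echelon n D L M" and e: "in_row_space n m L (unit_vec r)"
    and r: "r < m" "r \<notin> D" and D: "D \<subseteq> {..<m}"
  shows "\<not> nbrs n L r \<subseteq> M"
proof
  assume nbrs: "nbrs n L r \<subseteq> M"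
  obtain v where v: "\<And>r'. r' < m \<Longrightarrow> unit_vec r r' = (\<Sum>s<n. v s * L s r')"
    using e unfolding in_row_space_def by blast
  have v_marked: "v s = 0" if s: "s \<in> M" for s
  proof -
    obtain r' where r': "r' \<in> D" "L s r' \<noteq> 0"
      using echelonD(3)[OF ech s] by blast
    obtain t where t: "nbrs n L r' = {t}"
      using echelonD(2)[OF ech r'(1)] by blast
    have "s < n"
      using echelonD(1)[OF ech] s by auto
    then have "s \<in> nbrs n L r'"
      using r'(2) unfolding nbrs_def by simp
    then have col: "L t' r' = 0" if "t' < n" "t' \<noteq> s" for t'
      using t that unfolding nbrs_def by auto
    have "unit_vec r r' = (\<Sum>t<n. v t * L t r')"
      using v r'(1) D by auto
    also have "\<dots> = (\<Sum>t<n. if t = s then v s * L s r' else 0)"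
      using col by (intro sum.cong) auto
    also have "\<dots> = v s * L s r'"
      using \<open>s < n\<close> by simp
    finally show "v s = 0"
      using r' r(2) unfolding unit_vec_def by (auto split: if_splits)
  qed
  have "unit_vec r r = (\<Sum>s<n. v s * L s r)"
    using v r(1) by simp
  also have "\<dots> = 0"
    using nbrs v_marked unfolding nbrs_def by (intro sum.neutral) auto
  finally show False
    unfolding unit_vec_def by simp
qed

lemma run_echelon:
  assumes "run n m rs S S'" "echelon n D (fst S) (snd S)"
    and "distinct rs" "set rs \<inter> D = {}" "D \<union> set rs \<subseteq> {..<m}"
    and "\<And>r. r \<in> set rs \<Longrightarrow> in_row_space n m (fst S) (unit_vec r)"
  shows "echelon n (D \<union> set rs) (fst S') (snd S')"
  using assms
proof (induction arbitrary: D rule: run.induct)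
  case (run_Nil S)
  then show ?case by simp
next
  case (run_skip L r M rs S')
  then have False
    using echelon_unmarked_nbr[of n D L M m r] by auto
  then show ?case ..
next
  case (run_pivot cs L r M rs S')
  have "echelon n (insert r D) (pivot n m L r cs) (insert cs M)"
    using echelon_pivot run_pivot by auto
  moreover have "in_row_space n m (pivot n m L r cs) (unit_vec r')" if "r' \<in> set rs" for r'
    using run_pivot.prems(5) that pivot_row_space[OF run_pivot.hyps(1)] by simp
  ultimately have "echelon n (insert r D \<union> set rs) (fst S') (snd S')"
    using run_pivot.IH[of "insert r D"] run_pivot.prems(2-4) by simp
  then show ?case by simp
qed

lemma edges_iff: "(a, b) \<in> edges n m L \<longleftrightarrow>
   (\<exists>s r. s < n \<and> r < m \<and> L s r \<noteq> 0 \<and> (a = Inl s \<and> b = Inr r \<or> a = Inr r \<and> b = Inl s))"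
  unfolding edges_def by blast

lemma component_refl: "v \<in> component n m L v"
  unfolding component_def by simp

lemma component_step: "w \<in> component n m L v \<Longrightarrow> (w, u) \<in> edges n m L \<Longrightarrow> u \<in> component n m L v"
  unfolding component_def by (simp add: rtrancl_into_rtrancl)

lemma component_subset:
  assumes "v \<in> C" "\<And>a b. a \<in> C \<Longrightarrow> (a, b) \<in> edges n m L \<Longrightarrow> b \<in> C"
  shows "component n m L v \<subseteq> C"
proof
  fix w assume "w \<in> component n m L v"
  then have "(v, w) \<in> (edges n m L)\<^sup>*"
    unfolding component_def by simp
  then show "w \<in> C"
    by (induction rule: rtrancl_induct) (use assms in blast)+
qed

lemma component_isolated:
  assumes "\<And>r. r < m \<Longrightarrow> L s r = 0"
  shows "component n m L (Inl s) = {Inl s}"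
proof
  show "component n m L (Inl s) \<subseteq> {Inl s}"
    by (rule component_subset) (use assms in \<open>auto simp: edges_iff\<close>)
qed (simp add: component_refl)

lemma component_edge:
  assumes s: "s < n" and r: "r < m" and nz: "L s r \<noteq> 0"
    and col: "\<And>s'. s' < n \<Longrightarrow> L s' r \<noteq> 0 \<Longrightarrow> s' = s"
    and row: "\<And>r'. r' < m \<Longrightarrow> L s r' \<noteq> 0 \<Longrightarrow> r' = r"
    and v: "v \<in> {Inl s, Inr r}"
  shows "component n m L v = {Inl s, Inr r}"
proof
  show "component n m L v \<subseteq> {Inl s, Inr r}"
    by (rule component_subset) (use v col row in \<open>auto simp: edges_iff\<close>)
  have "(Inl s, Inr r) \<in> edges n m L" "(Inr r, Inl s) \<in> edges n m L"
    using s r nz unfolding edges_iff by blast+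
  then show "{Inl s, Inr r} \<subseteq> component n m L v"
    using v component_refl component_step by fastforce
qed

lemma echelon_returns_UB:
  assumes ech: "echelon n {..<m} L M"
  shows "returns_UB n m L"
  unfolding returns_UB_def
proof
  have edge: "component n m L v = {Inl s, Inr r}"
    if edge: "s < n" "r < m" "L s r \<noteq> 0" "v \<in> {Inl s, Inr r}" for s r v
  proof -
    obtain t where t: "nbrs n L r = {t}"
      using echelonD(2)[OF ech] edge(2) by blast
    have col: "s' = s" if "s' < n" "L s' r \<noteq> 0" for s'
    proof -
      have "s' \<in> nbrs n L r" "s \<in> nbrs n L r"
        using that edge(1,3) unfolding nbrs_def by simp_all
      then show ?thesis
        using t by simp
    qed
    have row: "r' = r" if "r' < m" "L s r' \<noteq> 0" for r'
      using echelonD(4)[OF ech \<open>s < n\<close>] that \<open>r < m\<close> \<open>L s r \<noteq> 0\<close> by simp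
    show ?thesis
      by (rule component_edge[of s n r m L v, OF edge(1-3) col row edge(4)])
  qed
  fix v assume "v \<in> vertices n m"
  then consider (species) s where "s < n" "v = Inl s" | (reaction) r where "r < m" "v = Inr r"
    unfolding vertices_def by blast
  then show "(\<exists>s<n. component n m L v = {Inl s}) \<or>
      (\<exists>s<n. \<exists>r<m. L s r \<noteq> 0 \<and> component n m L v = {Inl s, Inr r})"
  proof cases
    case (species s)
    show ?thesis
    proof (cases "\<exists>r<m. L s r \<noteq> 0")
      case True
      then obtain r where "r < m" "L s r \<noteq> 0"
        by blast
      then show ?thesis
        using edge[of s r v] species by auto
    next
      case False
      then show ?thesis
        using component_isolated[of m L s n] species by auto
    qed
  next
    case (reaction r)
    obtain s where "nbrs n L r = {s}"
      using echelonD(2)[OF ech] reaction(1) by blast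
    then have "s \<in> nbrs n L r"
      by simp
    then have "s < n" "L s r \<noteq> 0"
      unfolding nbrs_def by simp_all
    then show ?thesis
      using edge reaction by blast
  qed
qed

lemma returns_UB_unit_vec:
  assumes ub: "returns_UB n m L" and r: "r < m"
  shows "in_row_space n m L (unit_vec r)"
proof -
  have "Inr r \<in> vertices n m"
    using r unfolding vertices_def by blast
  moreover have "Inr r \<in> component n m L (Inr r)"
    by (rule component_refl)
  ultimately obtain s r0 where s: "s < n" "L s r0 \<noteq> 0"
    and C: "component n m L (Inr r) = {Inl s, Inr r0}"
    using ub unfolding returns_UB_def by fastforce
  then have "r0 = r"
    using component_refl[of "Inr r" n m L] by auto
  have "r' = r" if "r' < m" "L s r' \<noteq> 0" for r'
  proof -
    have "Inl s \<in> component n m L (Inr r)"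
      using C by simp
    then have "Inr r' \<in> component n m L (Inr r)"
      by (rule component_step) (use s that in \<open>auto simp: edges_iff\<close>)
    then show ?thesis
      using C \<open>r0 = r\<close> by auto
  qed
  then show ?thesis
    using in_row_space_unit_vec[OF s(1)] s(2) \<open>r0 = r\<close> by blast
qed

lemma run_returns_UB_iff:
  assumes run: "run n m order (L0, {}) (L, M)"
    and order: "distinct order" "set order = {..<m}"
  shows "returns_UB n m L \<longleftrightarrow> (\<forall>r<m. in_row_space n m L0 (unit_vec r))"
proof
  assume "returns_UB n m L"
  then show "\<forall>r<m. in_row_space n m L0 (unit_vec r)"
    using returns_UB_unit_vec[of n m L] run_row_space[OF run] by simp
next
  assume units: "\<forall>r<m. in_row_space n m L0 (unit_vec r)"
  have "echelon n ({} \<union> set order) (fst (L, M)) (snd (L, M))"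
    by (rule run_echelon[OF run]) (simp_all add: echelon_empty order units)
  then show "returns_UB n m L"
    using echelon_returns_UB order(2) by simp
qed

section \<open>The reaction network\<close>

locale reaction_network =
  fixes n c :: nat and y :: "nat \<Rightarrow> nat \<Rightarrow> nat" and rxns :: "(nat \<times> nat) list"
  assumes rxns_wf: "\<forall>(i, j)\<in>set rxns. i < c \<and> j < c \<and> i \<noteq> j"
    and rxns_once: "distinct (map (\<lambda>(i, j). {i, j}) rxns)"
begin

abbreviation "m \<equiv> length rxns"
abbreviation "A \<equiv> init_graph y rxns"

definition fwd_rate :: "nat \<Rightarrow> var" where
  "fwd_rate r = K (fst (rxns ! r)) (snd (rxns ! r))"

definition rev_rate :: "nat \<Rightarrow> var" where
  "rev_rate r = K (snd (rxns ! r)) (fst (rxns ! r))"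

definition reaction_binom :: "nat \<Rightarrow> mpoly" where
  "reaction_binom r = binom n y (fst (rxns ! r)) (snd (rxns ! r))"

lemma ss_poly_eq: "ss_poly n y rxns k = (\<Sum>r<m. Const (A k r) * reaction_binom r)"
  unfolding ss_poly_def init_graph_def reaction_binom_def by (simp add: case_prod_beta)

lemma reaction_wf:
  assumes "r < m"
  shows "fst (rxns ! r) < c" "snd (rxns ! r) < c" "fst (rxns ! r) \<noteq> snd (rxns ! r)"
  using rxns_wf nth_mem[OF assms] by (auto simp: case_prod_beta)

lemma reaction_eqI:
  assumes "r < m" "r' < m" "{fst (rxns ! r), snd (rxns ! r)} = {fst (rxns ! r'), snd (rxns ! r')}"
  shows "r = r'"
  using nth_eq_iff_index_eq[OF rxns_once] assms by (simp add: case_prod_beta)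

lemma rate_vars_distinct:
  assumes r: "r < m" "r' < m"
  shows "fwd_rate r = fwd_rate r' \<longleftrightarrow> r = r'"
    and "rev_rate r = rev_rate r' \<longleftrightarrow> r = r'"
    and "fwd_rate r \<noteq> rev_rate r'"
proof -
  let ?i = "fst (rxns ! r)" and ?j = "snd (rxns ! r)"
  let ?i' = "fst (rxns ! r')" and ?j' = "snd (rxns ! r')"
  have same: "r = r'" if "?i = ?i'" "?j = ?j'"
    using reaction_eqI[OF r] that by simp
  have swapped: "r = r'" if "?i = ?j'" "?j = ?i'"
    using reaction_eqI[OF r] that by (simp add: insert_commute)
  show "fwd_rate r = fwd_rate r' \<longleftrightarrow> r = r'" "rev_rate r = rev_rate r' \<longleftrightarrow> r = r'"
    using same unfolding fwd_rate_def rev_rate_def by auto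
  show "fwd_rate r \<noteq> rev_rate r'"
    using swapped reaction_wf(3)[OF r(1)] unfolding fwd_rate_def rev_rate_def by auto
qed

lemma deriv0_reaction_binom:
  assumes "r < m" "r' < m"
  shows "deriv0 (fwd_rate r) (reaction_binom r') = - unit_vec r r'"
    and "deriv0 (rev_rate r) (reaction_binom r') = unit_vec r r'"
proof -
  have binom: "deriv0 v (reaction_binom r') =
      (if v = rev_rate r' then 1 else 0) - (if v = fwd_rate r' then 1 else 0)"
    if "v = K a b" for v a b
    unfolding reaction_binom_def fwd_rate_def rev_rate_def that by (rule deriv0_binom)
  show "deriv0 (fwd_rate r) (reaction_binom r') = - unit_vec r r'"
    using binom[OF fwd_rate_def] rate_vars_distinct[OF assms] unfolding unit_vec_def by auto
  show "deriv0 (rev_rate r) (reaction_binom r') = unit_vec r r'"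
    using binom[OF rev_rate_def] rate_vars_distinct[OF assms] rate_vars_distinct[OF assms(2,1)]
    unfolding unit_vec_def by auto
qed

lemma deriv0_mult_rate:
  "deriv0 (fwd_rate r) (p * q) = eval0 p * deriv0 (fwd_rate r) q + deriv0 (fwd_rate r) p * eval0 q"
  "deriv0 (rev_rate r) (p * q) = eval0 p * deriv0 (rev_rate r) q + deriv0 (rev_rate r) p * eval0 q"
  unfolding fwd_rate_def rev_rate_def by (rule deriv0_mult)+

lemma eval0_ss_poly: "eval0 (ss_poly n y rxns k) = 0"
  unfolding ss_poly_eq reaction_binom_def by (simp add: coeff_sum_sum eval0_mult eval0_binom)

lemma deriv0_ss_poly:
  assumes "r < m"
  shows "deriv0 (fwd_rate r) (ss_poly n y rxns k) = - A k r"
    and "deriv0 (rev_rate r) (ss_poly n y rxns k) = A k r"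
proof -
  have "deriv0 (fwd_rate r) (ss_poly n y rxns k) = (\<Sum>r'<m. if r' = r then - A k r else 0)"
    unfolding ss_poly_eq coeff_sum_sum
    by (intro sum.cong) (simp_all add: deriv0_mult_rate eval0_binom reaction_binom_def[symmetric]
        deriv0_reaction_binom assms unit_vec_def)
  also have "\<dots> = - A k r"
    using assms by simp
  finally show "deriv0 (fwd_rate r) (ss_poly n y rxns k) = - A k r" .
  have "deriv0 (rev_rate r) (ss_poly n y rxns k) = (\<Sum>r'<m. if r' = r then A k r else 0)"
    unfolding ss_poly_eq coeff_sum_sum
    by (intro sum.cong) (simp_all add: deriv0_mult_rate eval0_binom reaction_binom_def[symmetric]
        deriv0_reaction_binom assms unit_vec_def)
  also have "\<dots> = A k r"
    using assms by simp
  finally show "deriv0 (rev_rate r) (ss_poly n y rxns k) = A k r" .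
qed

lemma steady_state_ideal_first_order:
  assumes "g \<in> steady_state_ideal n y rxns"
  shows "eval0 g = 0 \<and> (\<forall>r<m. deriv0 (fwd_rate r) g = - deriv0 (rev_rate r) g)
    \<and> in_row_space n m A (\<lambda>r. deriv0 (rev_rate r) g)"
  using assms unfolding steady_state_ideal_def
proof (induction rule: ideal_gen_induct)
  case zero
  show ?case
    by (simp add: in_row_space_0)
next
  case (add a b)
  then show ?case
    by (simp add: in_row_space_add)
next
  case (mult q a)
  then show ?case
    by (simp add: eval0_mult deriv0_mult_rate in_row_space_scale)
next
  case (base f)
  then obtain k where k: "k < n" "f = ss_poly n y rxns k"
    by blast
  have "in_row_space n m A (A k)"
    by (rule in_row_space_row) fact
  then have "in_row_space n m A (\<lambda>r. deriv0 (rev_rate r) f)"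
    by (rule in_row_space_eqI) (simp add: k deriv0_ss_poly)
  then show ?case
    using k by (simp add: eval0_ss_poly deriv0_ss_poly)
qed

lemma binomial_in_steady_state_ideal_unit_vec:
  assumes f: "f \<in> steady_state_ideal n y rxns" "is_binomial f"
    and r: "r < m" "deriv0 (fwd_rate r) f \<noteq> 0"
  shows "in_row_space n m A (unit_vec r)"
proof -
  let ?x = "\<lambda>r'. deriv0 (rev_rate r') f"
  have row_space: "in_row_space n m A ?x" and fwd: "\<And>r'. r' < m \<Longrightarrow> deriv0 (fwd_rate r') f = - ?x r'"
    using steady_state_ideal_first_order[OF f(1)] by auto
  have "?x r \<noteq> 0"
    using fwd[OF r(1)] r(2) by simp
  have "?x r' = 0" if "r' < m" "r' \<noteq> r" for r'
  proof (rule ccontr)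
    assume "?x r' \<noteq> 0"
    then have "deriv0 (fwd_rate r') f \<noteq> 0"
      using fwd[OF that(1)] by simp
    then show False
      using binomial_deriv0_nonzero_at_most_two[OF f(2), of "fst (rxns ! r)" "snd (rxns ! r)"]
        r(2) \<open>?x r' \<noteq> 0\<close>
        rate_vars_distinct[OF r(1) that(1)] rate_vars_distinct[OF that(1) that(1)] that(2)
      unfolding fwd_rate_def rev_rate_def by blast
  qed
  then have "1 / ?x r * ?x r' = unit_vec r r'" if "r' < m" for r'
    using \<open>?x r \<noteq> 0\<close> that unfolding unit_vec_def by auto
  then show ?thesis
    by (rule in_row_space_eqI[OF in_row_space_scale[OF row_space]])
qed

lemma coefficient_column_nonzero:
  assumes complexes_distinct: "\<forall>i<c. \<forall>j<c. i \<noteq> j \<longrightarrow> (\<exists>k<n. y i k \<noteq> y j k)" and r: "r < m"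
  obtains k where "k < n" "A k r \<noteq> 0"
proof -
  obtain k where "k < n" "y (fst (rxns ! r)) k \<noteq> y (snd (rxns ! r)) k"
    using complexes_distinct reaction_wf[OF r] by blast
  then show ?thesis
    using that unfolding init_graph_def coef_def by (simp add: case_prod_beta)
qed

lemma unconditionally_binomial_unit_vec:
  assumes complexes_distinct: "\<forall>i<c. \<forall>j<c. i \<noteq> j \<longrightarrow> (\<exists>k<n. y i k \<noteq> y j k)"
    and ub: "unconditionally_binomial n y rxns" and r: "r < m"
  shows "in_row_space n m A (unit_vec r)"
proof -
  obtain B where B: "\<forall>b\<in>B. is_binomial b" "ideal_gen B = steady_state_ideal n y rxns"
    using ub unfolding unconditionally_binomial_def by blast
  obtain k where k: "k < n" "A k r \<noteq> 0"
    using coefficient_column_nonzero[OF complexes_distinct r] .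
  have "ss_poly n y rxns k \<in> ideal_gen B"
    unfolding B(2) steady_state_ideal_def using k(1) by (intro ideal_gen_base) simp
  then obtain F q where F: "finite F" "F \<subseteq> B" "ss_poly n y rxns k = (\<Sum>f\<in>F. q f * f)"
    unfolding ideal_gen_def by blast
  have in_ideal: "f \<in> steady_state_ideal n y rxns" if "f \<in> F" for f
    using F(2) that B(2) ideal_gen_base by blast
  have "- A k r = deriv0 (fwd_rate r) (\<Sum>f\<in>F. q f * f)"
    using deriv0_ss_poly(1)[OF r, of k, symmetric] unfolding F(3) .
  also have "\<dots> = (\<Sum>f\<in>F. eval0 (q f) * deriv0 (fwd_rate r) f)"
    unfolding coeff_sum_sum using steady_state_ideal_first_order[OF in_ideal]
    by (intro sum.cong) (simp_all add: deriv0_mult_rate)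
  finally have "(\<Sum>f\<in>F. eval0 (q f) * deriv0 (fwd_rate r) f) \<noteq> 0"
    using k(2) by simp
  then obtain f where f: "f \<in> F" "eval0 (q f) * deriv0 (fwd_rate r) f \<noteq> 0"
    by (rule sum.not_neutral_contains_not_neutral)
  have "is_binomial f"
    using B(1) F(2) f(1) by blast
  then show ?thesis
    using binomial_in_steady_state_ideal_unit_vec[OF in_ideal[OF f(1)] _ r] f(2) by simp
qed

lemma reaction_binom_in_steady_state_ideal:
  assumes "in_row_space n m A (unit_vec r)" "r < m"
  shows "reaction_binom r \<in> steady_state_ideal n y rxns"
proof -
  obtain v where v: "\<And>r'. r' < m \<Longrightarrow> unit_vec r r' = (\<Sum>s<n. v s * A s r')"
    using assms(1) unfolding in_row_space_def by blast
  have "(\<Sum>s<n. Const (v s) * ss_poly n y rxns s)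
      = (\<Sum>r'<m. Const (\<Sum>s<n. v s * A s r') * reaction_binom r')"
    unfolding ss_poly_eq sum_distrib_left sum_distrib_right Const_sum[symmetric]
    by (subst sum.swap) (simp add: mult.assoc[symmetric] Const_mult)
  also have "\<dots> = (\<Sum>r'<m. if r' = r then reaction_binom r' else 0)"
    by (intro sum.cong) (simp_all add: v[symmetric] unit_vec_def)
  also have "\<dots> = reaction_binom r"
    using assms(2) by simp
  finally have "reaction_binom r = (\<Sum>s<n. Const (v s) * ss_poly n y rxns s)"
    by simp
  then show ?thesis
    unfolding steady_state_ideal_def by (simp add: ideal_gen_lincomb)
qed

lemma unit_vec_unconditionally_binomial:
  assumes "\<forall>r<m. in_row_space n m A (unit_vec r)"
  shows "unconditionally_binomial n y rxns"
proof -
  have "ideal_gen (reaction_binom ` {..<m}) \<subseteq> steady_state_ideal n y rxns"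
    using assms reaction_binom_in_steady_state_ideal unfolding steady_state_ideal_def
    by (intro ideal_gen_subset image_subsetI) simp
  moreover have "steady_state_ideal n y rxns \<subseteq> ideal_gen (reaction_binom ` {..<m})"
    unfolding steady_state_ideal_def ss_poly_eq
    by (intro ideal_gen_subset image_subsetI ideal_gen_lincomb) auto
  moreover have "\<forall>b\<in>reaction_binom ` {..<m}. is_binomial b"
    unfolding reaction_binom_def by (auto intro: binom_is_binomial)
  ultimately show ?thesis
    unfolding unconditionally_binomial_def by blast
qed

lemma unconditionally_binomial_iff_unit_vec:
  assumes "\<forall>i<c. \<forall>j<c. i \<noteq> j \<longrightarrow> (\<exists>k<n. y i k \<noteq> y j k)"
  shows "unconditionally_binomial n y rxns \<longleftrightarrow> (\<forall>r<m. in_row_space n m A (unit_vec r))"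
  using unconditionally_binomial_unit_vec[OF assms] unit_vec_unconditionally_binomial by blast

end

theorem mainTheorem1:
  fixes n c :: nat and y :: "nat \<Rightarrow> nat \<Rightarrow> nat" and rxns :: "(nat \<times> nat) list"
    and order :: "nat list"
  assumes complexes_distinct: "\<forall>i<c. \<forall>j<c. i \<noteq> j \<longrightarrow> (\<exists>k<n. y i k \<noteq> y j k)"
    and rxns_wf: "\<forall>(i, j)\<in>set rxns. i < c \<and> j < c \<and> i \<noteq> j"
    and rxns_once: "distinct (map (\<lambda>(i, j). {i, j}) rxns)"
    and order_perm: "distinct order" "set order = {..<length rxns}"
  shows "(\<exists>S. run n (length rxns) order (init_graph y rxns, {}) S) \<and>
         (\<forall>L M. run n (length rxns) order (init_graph y rxns, {}) (L, M) \<longrightarrow>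
            (returns_UB n (length rxns) L \<longleftrightarrow> unconditionally_binomial n y rxns))"
proof -
  interpret reaction_network n c y rxns
    using rxns_wf rxns_once by unfold_locales
  have "returns_UB n m L \<longleftrightarrow> unconditionally_binomial n y rxns"
    if "run n m order (A, {}) (L, M)" for L M
    using run_returns_UB_iff[OF that order_perm]
      unconditionally_binomial_iff_unit_vec[OF complexes_distinct] by simp
  then show ?thesis
    using run_exists by blast
qed

end
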